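(* Let $n,m$ be positive integers, $\Lambda:\mathbb{R}^{n\times n}\to\mathbb{R}^{m\times m}$ linear and $Y\in\mathbb{R}^{m\times m}$. For a real parameter $k\ge1$, call a triple $(\Phi_I,\Phi_V,\Phi_\phi)$ of real symmetric operators on $\mathcal{H}_{A_1}\otimes\mathcal{H}_{B_1}=\mathbb{R}^n\otimes\mathbb{R}^n$ $k$-feasible if \[ \Phi_V=V\Phi_I,\quad \Phi_\phi=\Phi_V^{T_{A_1}},\quad \Phi_I^{T_{A_1}}=\Phi_I,\quad V\Phi_\phi=\Phi_\phi,\quad \Phi_I+\Phi_V\ge0,\quad \Phi_I-\Phi_V\ge0,\quad \Phi_I+\Phi_V+k\Phi_\phi\ge0, \] \[ k^2\operatorname{Tr}(\Phi_I)+k\operatorname{Tr}(\Phi_V)+k\operatorname{Tr}(\Phi_\phi)=1,\qquad (\Lambda_{A_1}\otimes\mathrm{id}_{B_1})(k\Phi_I+\Phi_V+\Phi_\phi)=Y\otimes\operatorname{Tr}_{A_1}(k\Phi_I+\Phi_V+\Phi_\phi). \] If $(\Phi_I,\Phi_V,\Phi_\phi)$ is $k$-feasible with $k\ge1$, then for every real $k'\ge k$ there is a $k'$-feasible triple $(\Phi_I',\Phi_V',\Phi_\phi')$ with $k'^2\Phi_I'+k'\Phi_V'+k'\Phi_\phi'=k^2\Phi_I+k\Phi_V+k\Phi_\phi$.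
   Context: $V$ is the swap operator on $\mathbb{R}^n\otimes\mathbb{R}^n$; $T_{A_1}$ denotes the partial transpose on the first factor; $\operatorname{Tr}_{A_1}$ is the partial trace over the first factor; $\Lambda_{A_1}\otimes\mathrm{id}_{B_1}$ applies $\Lambda$ to the first factor; $\ge0$ means positive semidefinite. (This is the symmetry-reduced second level of the real hierarchy, in which the rank bound $k$ appears as a parameter.) *)

theory Defs
  imports "HOL-Analysis.Analysis"
begin

text \<open>Operators on R^n (x) R^n are real matrices indexed by pairs ('n * 'n),
  the first component being the A1 factor, the second the B1 factor.\<close>

type_synonym ('a,'b) bop = "real ^ ('a \<times> 'b) ^ ('a \<times> 'b)"

definition swapop :: "('n::finite, 'n) bop" where
  "swapop = (\<chi> p q. if fst p = snd q \<and> snd p = fst q then 1 else 0)"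

definition ptransA :: "('a::finite, 'b::finite) bop \<Rightarrow> ('a, 'b) bop" where
  "ptransA X = (\<chi> p q. X $ (fst q, snd p) $ (fst p, snd q))"

definition ptraceA :: "('a::finite, 'b::finite) bop \<Rightarrow> real ^ 'b ^ 'b" where
  "ptraceA X = (\<chi> b b'. \<Sum>a\<in>UNIV. X $ (a,b) $ (a,b'))"

definition mtrace :: "real ^ 'i ^ 'i \<Rightarrow> real" where
  "mtrace X = (\<Sum>i\<in>UNIV. X $ i $ i)"

definition symm :: "real ^ 'i ^ 'i \<Rightarrow> bool" where
  "symm X \<longleftrightarrow> transpose X = X"

definition psd :: "real ^ 'i ^ 'i \<Rightarrow> bool" where
  "psd X \<longleftrightarrow> symm X \<and> (\<forall>x. x \<bullet> (X *v x) \<ge> 0)"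

text \<open>(Lambda_{A1} (x) id_{B1}) X: apply Lambda to each block X^{bb'}.\<close>
definition mapA :: "(real ^ 'n ^ 'n \<Rightarrow> real ^ 'm ^ 'm) \<Rightarrow> ('n::finite, 'b::finite) bop \<Rightarrow> ('m::finite, 'b) bop" where
  "mapA L X = (\<chi> p q. L (\<chi> a a'. X $ (a, snd p) $ (a', snd q)) $ fst p $ fst q)"

definition kron :: "real ^ 'a ^ 'a \<Rightarrow> real ^ 'b ^ 'b \<Rightarrow> ('a::finite, 'b::finite) bop" where
  "kron Y Z = (\<chi> p q. Y $ fst p $ fst q * Z $ snd p $ snd q)"

definition feasible :: "(real ^ 'n ^ 'n \<Rightarrow> real ^ 'm ^ 'm) \<Rightarrow> real ^ 'm ^ 'm \<Rightarrow> real
    \<Rightarrow> ('n::finite, 'n) bop \<Rightarrow> ('n, 'n) bop \<Rightarrow> ('n, 'n) bop \<Rightarrow> bool" where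
  "feasible L Y k PI PV Pp \<longleftrightarrow>
     symm PI \<and> symm PV \<and> symm Pp \<and>
     PV = swapop ** PI \<and> Pp = ptransA PV \<and> ptransA PI = PI \<and> swapop ** Pp = Pp \<and>
     psd (PI + PV) \<and> psd (PI - PV) \<and> psd (PI + PV + k *\<^sub>R Pp) \<and>
     k^2 * mtrace PI + k * mtrace PV + k * mtrace Pp = 1 \<and>
     mapA L (k *\<^sub>R PI + PV + Pp) = kron Y (ptraceA (k *\<^sub>R PI + PV + Pp))"

end

theory Submission
  imports Defs
begin

(* The symmetries V and T_A1 permute the triple (Phi_I, Phi_V, Phi_phi): V exchanges the first two
   entries, the partial transpose the last two. Hence with S = Phi_I + Phi_V + Phi_phi every triple
   gamma (Phi_I, Phi_V, Phi_phi) + beta (S, S, S) satisfies the linear constraints again. S is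
   positive semidefinite, being a convex combination of Phi_I + Phi_V and Phi_I + Phi_V + k Phi_phi
   (here k >= 1 is used), so for gamma, beta >= 0 the first two positivity constraints survive.
   Demanding k'^2 Phi_I' + k' Phi_V' + k' Phi_phi' = k^2 Phi_I + k Phi_V + k Phi_phi gives two linear
   equations for gamma and beta. They fix the trace, and they make Phi_I' + Phi_V' + k' Phi_phi' and
   k' Phi_I' + Phi_V' + Phi_phi' one and the same nonnegative multiple of their unprimed counterparts
   at k, which settles the third positivity constraint and the Lambda constraint. For k' > k >= 1
   the solution gamma = k(k-1)/(k'(k'-1)), beta = k(k'-k)/(k'(k'-1)(k'+2)) is nonnegative. *)

lemma swapop_mult: "swapop ** X = (\<chi> p q. X $ (snd p, fst p) $ q)"
  for X :: "('n::finite, 'n) bop"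
proof -
  have "(\<Sum>r\<in>UNIV. (if fst p = snd r \<and> snd p = fst r then 1 else 0) * X $ r $ q)
      = X $ (snd p, fst p) $ q" for p q :: "'n \<times> 'n"
  proof -
    have "(fst p = snd r \<and> snd p = fst r) \<longleftrightarrow> r = (snd p, fst p)" for r :: "'n \<times> 'n"
      by auto
    then show ?thesis by (simp add: if_distrib [of "\<lambda>c. c * _"] cong: if_cong)
  qed
  then show ?thesis by (simp add: matrix_matrix_mult_def swapop_def vec_eq_iff)
qed

lemma swapop_mult_swapop: "swapop ** (swapop ** X) = X"
  for X :: "('n::finite, 'n) bop"
  by (simp add: swapop_mult vec_eq_iff)

lemma swapop_mult_scaleR: "swapop ** (c *\<^sub>R X) = c *\<^sub>R (swapop ** X)"
  for X :: "('n::finite, 'n) bop"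
  by (simp add: matrix_scalar_ac scalar_matrix_assoc)

lemma ptransA_add: "ptransA (X + Z) = ptransA X + ptransA Z"
  by (simp add: ptransA_def vec_eq_iff)

lemma ptransA_scaleR: "ptransA (c *\<^sub>R X) = c *\<^sub>R ptransA X"
  by (simp add: ptransA_def vec_eq_iff)

lemma ptransA_ptransA: "ptransA (ptransA X) = X"
  by (simp add: ptransA_def vec_eq_iff)

lemma symm_add: "symm X \<Longrightarrow> symm Z \<Longrightarrow> symm (X + Z)"
  by (simp add: symm_def transpose_def vec_eq_iff)

lemma symm_scaleR: "symm X \<Longrightarrow> symm (c *\<^sub>R X)"
  by (simp add: symm_def transpose_scalar)

lemma psd_add: "psd X \<Longrightarrow> psd Z \<Longrightarrow> psd (X + Z)"
  by (simp add: psd_def symm_add matrix_vector_mult_add_rdistrib inner_add_right add_nonneg_nonneg)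

lemma psd_scaleR: "psd X \<Longrightarrow> 0 \<le> c \<Longrightarrow> psd (c *\<^sub>R X)"
  by (simp add: psd_def symm_scaleR scaleR_matrix_vector_assoc [symmetric])

lemma psd_add_of_psd_add_scaleR:
  fixes X Z :: "real ^ 'i::finite ^ 'i"
  assumes "psd X" and "psd (X + k *\<^sub>R Z)" and "1 \<le> k"
  shows "psd (X + Z)"
proof -
  have "X + Z = (1 - 1 / k) *\<^sub>R X + (1 / k) *\<^sub>R (X + k *\<^sub>R Z)"
    using \<open>1 \<le> k\<close> by (simp add: algebra_simps)
  then show ?thesis
    using assms by (simp add: psd_add psd_scaleR)
qed

lemma mtrace_add: "mtrace (X + Z) = mtrace X + mtrace Z"
  by (simp add: mtrace_def sum.distrib)

lemma mtrace_scaleR: "mtrace (c *\<^sub>R X) = c * mtrace X"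
  by (simp add: mtrace_def sum_distrib_left)

lemma kron_ptraceA_scaleR: "kron Y (ptraceA (c *\<^sub>R X)) = c *\<^sub>R kron Y (ptraceA X)"
  by (simp add: kron_def ptraceA_def vec_eq_iff sum_distrib_left mult_ac)

lemma mapA_scaleR:
  assumes "linear L"
  shows "mapA L (c *\<^sub>R X) = c *\<^sub>R mapA L X"
proof -
  have block: "(\<chi> a a'. (c *\<^sub>R X) $ (a, b) $ (a', b')) = c *\<^sub>R (\<chi> a a'. X $ (a, b) $ (a', b'))"
    for b b'
    by (simp add: vec_eq_iff)
  show ?thesis
    unfolding mapA_def block linear_scale [OF assms] by (simp add: vec_eq_iff)
qed

definition symmetry_reduced :: "('n::finite, 'n) bop \<Rightarrow> ('n, 'n) bop \<Rightarrow> ('n, 'n) bop \<Rightarrow> bool" where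
  "symmetry_reduced PI PV Pp \<longleftrightarrow>
     symm PI \<and> symm PV \<and> symm Pp \<and>
     PV = swapop ** PI \<and> Pp = ptransA PV \<and> ptransA PI = PI \<and> swapop ** Pp = Pp"

lemma feasible_iff_symmetry_reduced:
  "feasible L Y k PI PV Pp \<longleftrightarrow>
     symmetry_reduced PI PV Pp \<and>
     psd (PI + PV) \<and> psd (PI - PV) \<and> psd (PI + PV + k *\<^sub>R Pp) \<and>
     k^2 * mtrace PI + k * mtrace PV + k * mtrace Pp = 1 \<and>
     mapA L (k *\<^sub>R PI + PV + Pp) = kron Y (ptraceA (k *\<^sub>R PI + PV + Pp))"
  by (auto simp: feasible_def symmetry_reduced_def)

lemma symmetry_reduced_lincomb:
  assumes "symmetry_reduced X1 X2 X3" and "symmetry_reduced Z1 Z2 Z3"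
  shows "symmetry_reduced (a *\<^sub>R X1 + b *\<^sub>R Z1) (a *\<^sub>R X2 + b *\<^sub>R Z2) (a *\<^sub>R X3 + b *\<^sub>R Z3)"
proof -
  from assms have "symm X1" "symm X2" "symm X3" "swapop ** X1 = X2" "ptransA X2 = X3"
      "ptransA X1 = X1" "swapop ** X3 = X3"
    and "symm Z1" "symm Z2" "symm Z3" "swapop ** Z1 = Z2" "ptransA Z2 = Z3"
      "ptransA Z1 = Z1" "swapop ** Z3 = Z3"
    unfolding symmetry_reduced_def by blast+
  then show ?thesis
    by (simp add: symmetry_reduced_def symm_add symm_scaleR matrix_add_ldistrib swapop_mult_scaleR
        ptransA_add ptransA_scaleR)
qed

lemma symmetry_reduced_sum:
  assumes "symmetry_reduced PI PV Pp"
  defines "S \<equiv> PI + PV + Pp"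
  shows "symmetry_reduced S S S"
proof -
  from assms(1) have "symm PI" "symm PV" "symm Pp" "swapop ** PI = PV" "swapop ** PV = PI"
      "ptransA PV = Pp" "ptransA Pp = PV" "ptransA PI = PI" "swapop ** Pp = Pp"
    by (auto simp: symmetry_reduced_def swapop_mult_swapop ptransA_ptransA)
  then show ?thesis
    by (simp add: S_def symmetry_reduced_def symm_add matrix_add_ldistrib ptransA_add algebra_simps)
qed

lemma mix_with_sum_identities:
  fixes PI PV Pp :: "'a::euclidean_space"
  assumes coeff_I: "k' * (k' * \<gamma> + (k' + 2) * \<beta>) = k^2"
    and coeff_V: "k' * (\<gamma> + (k' + 2) * \<beta>) = k"
    and "k' \<noteq> 0"
  defines "S \<equiv> PI + PV + Pp"
  defines "A \<equiv> \<gamma> *\<^sub>R PI + \<beta> *\<^sub>R S" and "B \<equiv> \<gamma> *\<^sub>R PV + \<beta> *\<^sub>R S" and "C \<equiv> \<gamma> *\<^sub>R Pp + \<beta> *\<^sub>R S"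
  shows "k'^2 *\<^sub>R A + k' *\<^sub>R B + k' *\<^sub>R C = k^2 *\<^sub>R PI + k *\<^sub>R PV + k *\<^sub>R Pp"
    and "A + B + k' *\<^sub>R C = (\<gamma> + (k' + 2) * \<beta>) *\<^sub>R (PI + PV + k *\<^sub>R Pp)"
    and "k' *\<^sub>R A + B + C = (\<gamma> + (k' + 2) * \<beta>) *\<^sub>R (k *\<^sub>R PI + PV + Pp)"
proof -
  define c where "c = \<gamma> + (k' + 2) * \<beta>"
  have coeff_c: "k' * \<gamma> + (k' + 2) * \<beta> = k * c"
  proof -
    have "k' * (k * c) = k * (k' * c)"
      by (simp add: mult_ac)
    also have "\<dots> = k' * (k' * \<gamma> + (k' + 2) * \<beta>)"
      using coeff_I coeff_V by (simp add: c_def power2_eq_square)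
    finally show ?thesis
      using \<open>k' \<noteq> 0\<close> by simp
  qed
  have "k'^2 *\<^sub>R A + k' *\<^sub>R B + k' *\<^sub>R C
      = (k' * (k' * \<gamma> + (k' + 2) * \<beta>)) *\<^sub>R PI + (k' * (\<gamma> + (k' + 2) * \<beta>)) *\<^sub>R (PV + Pp)"
    by (simp add: A_def B_def C_def S_def euclidean_eq_iff [where 'a='a] inner_simps
        power2_eq_square algebra_simps)
  then show "k'^2 *\<^sub>R A + k' *\<^sub>R B + k' *\<^sub>R C = k^2 *\<^sub>R PI + k *\<^sub>R PV + k *\<^sub>R Pp"
    by (simp add: coeff_I coeff_V scaleR_add_right)
  have "A + B + k' *\<^sub>R C = c *\<^sub>R (PI + PV) + (k' * \<gamma> + (k' + 2) * \<beta>) *\<^sub>R Pp"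
    by (simp add: A_def B_def C_def S_def c_def euclidean_eq_iff [where 'a='a] inner_simps
        algebra_simps)
  then show "A + B + k' *\<^sub>R C = (\<gamma> + (k' + 2) * \<beta>) *\<^sub>R (PI + PV + k *\<^sub>R Pp)"
    unfolding coeff_c by (simp add: c_def scaleR_add_right mult.commute)
  have "k' *\<^sub>R A + B + C = (k' * \<gamma> + (k' + 2) * \<beta>) *\<^sub>R PI + c *\<^sub>R (PV + Pp)"
    by (simp add: A_def B_def C_def S_def c_def euclidean_eq_iff [where 'a='a] inner_simps
        algebra_simps)
  then show "k' *\<^sub>R A + B + C = (\<gamma> + (k' + 2) * \<beta>) *\<^sub>R (k *\<^sub>R PI + PV + Pp)"
    unfolding coeff_c by (simp add: c_def scaleR_add_right mult.commute)
qed

lemma feasible_mix_with_sum: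
  fixes PI PV Pp :: "('n::finite, 'n) bop"
  assumes "linear L" and "feasible L Y k PI PV Pp" and "1 \<le> k" and "0 < k'"
    and "0 \<le> \<gamma>" and "0 \<le> \<beta>"
    and coeff_I: "k' * (k' * \<gamma> + (k' + 2) * \<beta>) = k^2"
    and coeff_V: "k' * (\<gamma> + (k' + 2) * \<beta>) = k"
  defines "S \<equiv> PI + PV + Pp"
  defines "A \<equiv> \<gamma> *\<^sub>R PI + \<beta> *\<^sub>R S" and "B \<equiv> \<gamma> *\<^sub>R PV + \<beta> *\<^sub>R S" and "C \<equiv> \<gamma> *\<^sub>R Pp + \<beta> *\<^sub>R S"
  shows "feasible L Y k' A B C \<and>
    k'^2 *\<^sub>R A + k' *\<^sub>R B + k' *\<^sub>R C = k^2 *\<^sub>R PI + k *\<^sub>R PV + k *\<^sub>R Pp"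
proof -
  from assms(2) have reduced: "symmetry_reduced PI PV Pp"
    and psd_plus: "psd (PI + PV)" and psd_minus: "psd (PI - PV)"
    and psd_phi: "psd (PI + PV + k *\<^sub>R Pp)"
    and trace: "k^2 * mtrace PI + k * mtrace PV + k * mtrace Pp = 1"
    and channel: "mapA L (k *\<^sub>R PI + PV + Pp) = kron Y (ptraceA (k *\<^sub>R PI + PV + Pp))"
    by (simp_all add: feasible_iff_symmetry_reduced)
  have "k' \<noteq> 0"
    using \<open>0 < k'\<close> by simp
  note identities = mix_with_sum_identities [OF coeff_I coeff_V \<open>k' \<noteq> 0\<close>, of PI PV Pp,
      folded S_def A_def B_def C_def]
  have c_nonneg: "0 \<le> \<gamma> + (k' + 2) * \<beta>"
    using \<open>0 < k'\<close> \<open>0 \<le> \<gamma>\<close> \<open>0 \<le> \<beta>\<close> by simp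
  have "symmetry_reduced A B C"
    unfolding A_def B_def C_def S_def
    by (rule symmetry_reduced_lincomb [OF reduced symmetry_reduced_sum [OF reduced]])
  moreover have "psd (A + B)"
  proof -
    have "psd S"
      unfolding S_def using psd_plus psd_phi \<open>1 \<le> k\<close> by (rule psd_add_of_psd_add_scaleR)
    moreover have "A + B = \<gamma> *\<^sub>R (PI + PV) + (2 * \<beta>) *\<^sub>R S"
      by (simp add: A_def B_def vec_eq_iff algebra_simps)
    ultimately show ?thesis
      using psd_plus \<open>0 \<le> \<gamma>\<close> \<open>0 \<le> \<beta>\<close> by (simp add: psd_add psd_scaleR)
  qed
  moreover have "psd (A - B)"
  proof -
    have "A - B = \<gamma> *\<^sub>R (PI - PV)"
      by (simp add: A_def B_def algebra_simps)
    then show ?thesis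
      using psd_minus \<open>0 \<le> \<gamma>\<close> by (simp add: psd_scaleR)
  qed
  moreover have "psd (A + B + k' *\<^sub>R C)"
    using identities(2) psd_phi c_nonneg by (simp add: psd_scaleR)
  moreover have "k'^2 * mtrace A + k' * mtrace B + k' * mtrace C = 1"
    using arg_cong [OF identities(1), of mtrace] trace
    by (simp add: mtrace_add mtrace_scaleR)
  moreover have "mapA L (k' *\<^sub>R A + B + C) = kron Y (ptraceA (k' *\<^sub>R A + B + C))"
    using identities(3) channel
    by (simp add: mapA_scaleR [OF \<open>linear L\<close>] kron_ptraceA_scaleR)
  ultimately show ?thesis
    using identities(1) by (simp add: feasible_iff_symmetry_reduced)
qed

lemma mixing_coefficients_exist:
  fixes k k' :: real
  assumes "1 \<le> k" and "k \<le> k'"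
  obtains \<gamma> \<beta> where "0 \<le> \<gamma>" and "0 \<le> \<beta>"
    and "k' * (k' * \<gamma> + (k' + 2) * \<beta>) = k^2" and "k' * (\<gamma> + (k' + 2) * \<beta>) = k"
proof (cases "k' = k")
  case True
  \<comment> \<open>the formulas of the other case would divide by zero for k = k' = 1\<close>
  then show ?thesis
    using that [of 1 0] by (simp add: power2_eq_square)
next
  case False
  with assms have "1 < k'" by simp
  define \<gamma> where "\<gamma> = k * (k - 1) / (k' * (k' - 1))"
  define \<beta> where "\<beta> = k * (k' - k) / (k' * (k' - 1) * (k' + 2))"
  show ?thesis
  proof (rule that [of \<gamma> \<beta>])
    show "0 \<le> \<gamma>" and "0 \<le> \<beta>"
      using assms \<open>1 < k'\<close> by (simp_all add: \<gamma>_def \<beta>_def)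
    have "k' - 1 \<noteq> 0"
      using \<open>1 < k'\<close> by simp
    have \<gamma>_scaled: "k' * \<gamma> = k * (k - 1) / (k' - 1)"
      using \<open>1 < k'\<close> by (simp add: \<gamma>_def)
    have \<beta>_scaled: "k' * ((k' + 2) * \<beta>) = k * (k' - k) / (k' - 1)"
      using \<open>1 < k'\<close> by (simp add: \<beta>_def)
    have "k' * (k' * \<gamma> + (k' + 2) * \<beta>) = k' * (k * (k - 1) / (k' - 1)) + k * (k' - k) / (k' - 1)"
      by (simp only: distrib_left \<gamma>_scaled \<beta>_scaled)
    also have "\<dots> = k^2"
      using \<open>k' - 1 \<noteq> 0\<close> by (simp add: divide_simps) (simp add: algebra_simps power2_eq_square)
    finally show "k' * (k' * \<gamma> + (k' + 2) * \<beta>) = k^2" .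
    have "k' * (\<gamma> + (k' + 2) * \<beta>) = k * (k - 1) / (k' - 1) + k * (k' - k) / (k' - 1)"
      by (simp only: distrib_left \<gamma>_scaled \<beta>_scaled)
    also have "\<dots> = k"
      using \<open>k' - 1 \<noteq> 0\<close> by (simp add: divide_simps) (simp add: algebra_simps)
    finally show "k' * (\<gamma> + (k' + 2) * \<beta>) = k" .
  qed
qed

theorem mainTheorem13:
  fixes L :: "real ^ 'n::finite ^ 'n \<Rightarrow> real ^ 'm::finite ^ 'm"
    and Y :: "real ^ 'm ^ 'm"
    and k :: real
    and PI PV Pp :: "('n, 'n) bop"
  assumes "linear L"
    and "k \<ge> 1"
    and "feasible L Y k PI PV Pp"
  shows "\<forall>k'::real. k' \<ge> k \<longrightarrow>
    (\<exists>PI' PV' Pp'. feasible L Y k' PI' PV' Pp' \<and>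
       k'^2 *\<^sub>R PI' + k' *\<^sub>R PV' + k' *\<^sub>R Pp' = k^2 *\<^sub>R PI + k *\<^sub>R PV + k *\<^sub>R Pp)"
proof (intro allI impI)
  fix k' :: real
  assume "k' \<ge> k"
  then obtain \<gamma> \<beta> where "0 \<le> \<gamma>" "0 \<le> \<beta>"
    and "k' * (k' * \<gamma> + (k' + 2) * \<beta>) = k^2" "k' * (\<gamma> + (k' + 2) * \<beta>) = k"
    using \<open>k \<ge> 1\<close> mixing_coefficients_exist by blast
  moreover have "0 < k'"
    using \<open>k' \<ge> k\<close> \<open>k \<ge> 1\<close> by simp
  ultimately show "\<exists>PI' PV' Pp'. feasible L Y k' PI' PV' Pp' \<and>
      k'^2 *\<^sub>R PI' + k' *\<^sub>R PV' + k' *\<^sub>R Pp' = k^2 *\<^sub>R PI + k *\<^sub>R PV + k *\<^sub>R Pp"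
    using feasible_mix_with_sum [OF \<open>linear L\<close> \<open>feasible L Y k PI PV Pp\<close> \<open>k \<ge> 1\<close>] by blast
qed

end
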